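(* Let $(I,\le)$ be a directed partially ordered set and let $(R_i,\varphi_{ij})_{i\le j}$ be a directed system of rings and ring homomorphisms indexed by $I$ (so $\varphi_{ii}=\mathrm{id}$ and $\varphi_{jk}\circ\varphi_{ij}=\varphi_{ik}$ for $i\le j\le k$). If each $R_i$ satisfies the irreducible intersection property, then $\operatorname{colim}_{i\in I}R_i$ satisfies the irreducible intersection property.
   Context: All rings are commutative with $1$. A ring $R$ satisfies the irreducible intersection property if for any prime ideals $p_1,p_2\subset R$, either $p_1+p_2=R$ or $p_1+p_2$ is a prime ideal. A partially ordered set $I$ is directed if for all $i,j\in I$ there is $k\in I$ with $i,j\le k$. *)

theory Defs
  imports "HOL-Algebra.Algebra"
begin

text \<open>Irreducible intersection property: for any prime ideals p1, p2 of R,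
  either p1 + p2 = R or p1 + p2 is a prime ideal.  (In HOL-Algebra a prime
  ideal is proper by definition.)\<close>
definition irreducible_intersection_property :: "('a, 'm) ring_scheme \<Rightarrow> bool" where
  "irreducible_intersection_property R \<longleftrightarrow>
     (\<forall>p1 p2. primeideal p1 R \<and> primeideal p2 R \<longrightarrow>
        p1 <+>\<^bsub>R\<^esub> p2 = carrier R \<or> primeideal (p1 <+>\<^bsub>R\<^esub> p2) R)"

definition directed_system :: "('i::order \<Rightarrow> 'a ring) \<Rightarrow> ('i \<Rightarrow> 'i \<Rightarrow> 'a \<Rightarrow> 'a) \<Rightarrow> bool" where
  "directed_system R phi \<longleftrightarrow>
     (\<forall>i. cring (R i)) \<and>
     (\<forall>i j. i \<le> j \<longrightarrow> phi i j \<in> ring_hom (R i) (R j)) \<and>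
     (\<forall>i. \<forall>x\<in>carrier (R i). phi i i x = x) \<and>
     (\<forall>i j k. i \<le> j \<and> j \<le> k \<longrightarrow> (\<forall>x\<in>carrier (R i). phi j k (phi i j x) = phi i k x))"

text \<open>The standard construction of the directed colimit: the disjoint union of the carriers
  modulo (i,x) ~ (j,y) iff x and y become equal in some R k with i,j \<le> k.\<close>
definition dlim_rel :: "('i::order \<Rightarrow> 'a ring) \<Rightarrow> ('i \<Rightarrow> 'i \<Rightarrow> 'a \<Rightarrow> 'a) \<Rightarrow> (('i \<times> 'a) \<times> ('i \<times> 'a)) set" where
  "dlim_rel R phi = {((i, x), (j, y)). x \<in> carrier (R i) \<and> y \<in> carrier (R j) \<and>
       (\<exists>k. i \<le> k \<and> j \<le> k \<and> phi i k x = phi j k y)}"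

definition dlim_class :: "('i::order \<Rightarrow> 'a ring) \<Rightarrow> ('i \<Rightarrow> 'i \<Rightarrow> 'a \<Rightarrow> 'a) \<Rightarrow> 'i \<Rightarrow> 'a \<Rightarrow> ('i \<times> 'a) set" where
  "dlim_class R phi i x = dlim_rel R phi `` {(i, x)}"

definition dlim_op :: "('i::order \<Rightarrow> 'a ring) \<Rightarrow> ('i \<Rightarrow> 'i \<Rightarrow> 'a \<Rightarrow> 'a)
    \<Rightarrow> ('i \<Rightarrow> 'a \<Rightarrow> 'a \<Rightarrow> 'a) \<Rightarrow> ('i \<times> 'a) set \<Rightarrow> ('i \<times> 'a) set \<Rightarrow> ('i \<times> 'a) set" where
  "dlim_op R phi f A B =
     (\<Union>p\<in>A. \<Union>q\<in>B. \<Union>k\<in>{k. fst p \<le> k \<and> fst q \<le> k}.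
        dlim_class R phi k (f k (phi (fst p) k (snd p)) (phi (fst q) k (snd q))))"

definition direct_limit :: "('i::order \<Rightarrow> 'a ring) \<Rightarrow> ('i \<Rightarrow> 'i \<Rightarrow> 'a \<Rightarrow> 'a) \<Rightarrow> ('i \<times> 'a) set ring" where
  "direct_limit R phi =
    \<lparr> partial_object.carrier = (Sigma UNIV (\<lambda>i. carrier (R i))) // dlim_rel R phi,
      monoid.mult = dlim_op R phi (\<lambda>k. monoid.mult (R k)),
      monoid.one = (\<Union>i. dlim_class R phi i (monoid.one (R i))),
      ring.zero = (\<Union>i. dlim_class R phi i (ring.zero (R i))),
      ring.add = dlim_op R phi (\<lambda>k. ring.add (R k)) \<rparr>"

end

theory Submission
  imports Defs
begin

(* Let D be the direct limit of a directed system (R_i, phi_ij).  Every element of D is the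
   class cl i x of some x in R_i, and by directedness any finitely many elements of D come
   from one common stage R_k.  Addition and multiplication of classes are computed stagewise,
   so each ring axiom of D reduces to the same axiom in a single R_k; hence D is a commutative
   ring and every canonical map cl k : R_k -> D is a ring homomorphism.

   For ideals P, Q of D let P_k, Q_k be their contractions to R_k (prime if P, Q are) and
   S_k = P_k + Q_k.  The key observation is that cl k x lies in P + Q iff phi_km x lies in
   S_m for some m >= k.  Consequently P + Q = D as soon as one S_k is all of R_k, and P + Q is
   prime as soon as every S_k is prime.  By the irreducible intersection property of the R_k
   one of these two cases always occurs, which proves the theorem. *)

locale directed_ring_system =
  fixes R :: "'i::order \<Rightarrow> 'a ring" and phi :: "'i \<Rightarrow> 'i \<Rightarrow> 'a \<Rightarrow> 'a"
  assumes directed: "\<forall>i j::'i. \<exists>k. i \<le> k \<and> j \<le> k"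
    and system: "directed_system R phi"
begin

abbreviation D :: "('i \<times> 'a) set ring" where "D \<equiv> direct_limit R phi"
abbreviation cl :: "'i \<Rightarrow> 'a \<Rightarrow> ('i \<times> 'a) set" where "cl \<equiv> dlim_class R phi"

lemma stage_cring: "cring (R i)"
  using system unfolding directed_system_def by simp

lemma stage_ring: "ring (R i)"
  using stage_cring cring.axioms(1) by blast

lemma transition_hom: "i \<le> j \<Longrightarrow> phi i j \<in> ring_hom (R i) (R j)"
  using system unfolding directed_system_def by blast

lemma transition_id: "x \<in> carrier (R i) \<Longrightarrow> phi i i x = x"
  using system unfolding directed_system_def by blast

lemma transition_comp:
  "i \<le> j \<Longrightarrow> j \<le> k \<Longrightarrow> x \<in> carrier (R i) \<Longrightarrow> phi j k (phi i j x) = phi i k x"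
  using system unfolding directed_system_def by blast

lemma upper_bound:
  fixes i j :: 'i
  obtains k where "i \<le> k" "j \<le> k"
  using directed by blast

lemma transition_closed: "i \<le> j \<Longrightarrow> x \<in> carrier (R i) \<Longrightarrow> phi i j x \<in> carrier (R j)"
  by (rule ring_hom_closed[OF transition_hom])

lemma transition_one: "i \<le> j \<Longrightarrow> phi i j \<one>\<^bsub>R i\<^esub> = \<one>\<^bsub>R j\<^esub>"
  by (rule ring_hom_one[OF transition_hom])

lemma transition_zero: "i \<le> j \<Longrightarrow> phi i j \<zero>\<^bsub>R i\<^esub> = \<zero>\<^bsub>R j\<^esub>"
  by (rule ring_hom_zero[OF transition_hom stage_ring stage_ring])

lemma dlim_rel_iff: "((i, x), (j, y)) \<in> dlim_rel R phi \<longleftrightarrow>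
    x \<in> carrier (R i) \<and> y \<in> carrier (R j) \<and> (\<exists>k. i \<le> k \<and> j \<le> k \<and> phi i k x = phi j k y)"
  by (simp add: dlim_rel_def)

(* Transitivity of the colimit relation: the one place where directedness is essential. *)
lemma dlim_rel_trans:
  assumes "((i, x), (j, y)) \<in> dlim_rel R phi" and "((j, y), (l, z)) \<in> dlim_rel R phi"
  shows "((i, x), (l, z)) \<in> dlim_rel R phi"
proof -
  from assms(1) obtain k where k: "i \<le> k" "j \<le> k" "phi i k x = phi j k y"
    and x: "x \<in> carrier (R i)" and y: "y \<in> carrier (R j)"
    by (auto simp: dlim_rel_iff)
  from assms(2) obtain k' where k': "j \<le> k'" "l \<le> k'" "phi j k' y = phi l k' z"
    and z: "z \<in> carrier (R l)"
    by (auto simp: dlim_rel_iff)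
  obtain n where n: "k \<le> n" "k' \<le> n" by (rule upper_bound)
  have "phi i n x = phi k n (phi i k x)" using transition_comp[OF k(1) n(1) x] by simp
  also have "\<dots> = phi j n y" using transition_comp[OF k(2) n(1) y] k(3) by simp
  also have "\<dots> = phi k' n (phi j k' y)" using transition_comp[OF k'(1) n(2) y] by simp
  also have "\<dots> = phi l n z" using transition_comp[OF k'(2) n(2) z] k'(3) by simp
  finally show ?thesis
    using x z k(1) k'(2) n order_trans by (auto simp: dlim_rel_iff)
qed

lemma dlim_rel_equiv: "equiv (SIGMA i:UNIV. carrier (R i)) (dlim_rel R phi)"
proof (rule equivI)
  show "dlim_rel R phi \<subseteq> (SIGMA i:UNIV. carrier (R i)) \<times> (SIGMA i:UNIV. carrier (R i))"
    by (auto simp: dlim_rel_def)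
  show "refl_on (SIGMA i:UNIV. carrier (R i)) (dlim_rel R phi)"
    unfolding refl_on_def by (auto simp: dlim_rel_def)
  show "sym (dlim_rel R phi)"
    unfolding sym_def by (auto simp: dlim_rel_def)
  show "trans (dlim_rel R phi)"
    unfolding trans_def by (clarify, rule dlim_rel_trans)
qed

lemma class_eq_iff:
  assumes "x \<in> carrier (R i)" and "y \<in> carrier (R j)"
  shows "cl i x = cl j y \<longleftrightarrow> (\<exists>k. i \<le> k \<and> j \<le> k \<and> phi i k x = phi j k y)"
  unfolding dlim_class_def
  using eq_equiv_class_iff[OF dlim_rel_equiv, of "(i, x)" "(j, y)"] assms
  by (simp add: dlim_rel_iff)

lemma class_lift: "i \<le> k \<Longrightarrow> x \<in> carrier (R i) \<Longrightarrow> cl i x = cl k (phi i k x)"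
  by (subst class_eq_iff) (auto intro!: exI[of _ k] simp: transition_closed transition_id)

lemma mem_class_iff: "(j, a) \<in> cl i x \<longleftrightarrow>
    x \<in> carrier (R i) \<and> a \<in> carrier (R j) \<and> (\<exists>k. i \<le> k \<and> j \<le> k \<and> phi i k x = phi j k a)"
  by (simp add: dlim_class_def dlim_rel_iff)

lemma carrier_direct_limit: "carrier D = {cl i x | i x. x \<in> carrier (R i)}"
  by (auto simp: direct_limit_def quotient_def dlim_class_def)

lemma class_closed: "x \<in> carrier (R i) \<Longrightarrow> cl i x \<in> carrier D"
  by (auto simp: carrier_direct_limit)

lemma carrier_cases:
  assumes "a \<in> carrier D"
  obtains i x where "x \<in> carrier (R i)" "a = cl i x"
  using assms by (auto simp: carrier_direct_limit)

lemma common_stage2: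
  assumes "a \<in> carrier D" "b \<in> carrier D"
  obtains k x y where "x \<in> carrier (R k)" "y \<in> carrier (R k)" "a = cl k x" "b = cl k y"
proof -
  obtain i x where x: "x \<in> carrier (R i)" "a = cl i x" using assms(1) by (rule carrier_cases)
  obtain j y where y: "y \<in> carrier (R j)" "b = cl j y" using assms(2) by (rule carrier_cases)
  obtain k where k: "i \<le> k" "j \<le> k" by (rule upper_bound)
  show ?thesis
    using that[of "phi i k x" k "phi j k y"] x y k class_lift transition_closed by simp
qed

lemma common_stage3:
  assumes "a \<in> carrier D" "b \<in> carrier D" "c \<in> carrier D"
  obtains k x y z where "x \<in> carrier (R k)" "y \<in> carrier (R k)" "z \<in> carrier (R k)"
    "a = cl k x" "b = cl k y" "c = cl k z"
proof -
  obtain i x y where xy: "x \<in> carrier (R i)" "y \<in> carrier (R i)" "a = cl i x" "b = cl i y"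
    using assms(1,2) by (rule common_stage2)
  obtain j z where z: "z \<in> carrier (R j)" "c = cl j z" using assms(3) by (rule carrier_cases)
  obtain k where k: "i \<le> k" "j \<le> k" by (rule upper_bound)
  show ?thesis
    using that[of "phi i k x" k "phi i k y" "phi j k z"] xy z k class_lift transition_closed
    by simp
qed

(* Operations on classes.  An operation f given at every stage, preserved by the transition
   maps, induces dlim_op on D; each term of the union defining dlim_op is the same class. *)
lemma op_term_class:
  assumes closed: "\<And>k a b. a \<in> carrier (R k) \<Longrightarrow> b \<in> carrier (R k) \<Longrightarrow> f k a b \<in> carrier (R k)"
    and compat: "\<And>k m a b. k \<le> m \<Longrightarrow> a \<in> carrier (R k) \<Longrightarrow> b \<in> carrier (R k) \<Longrightarrow>
       phi k m (f k a b) = f m (phi k m a) (phi k m b)"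
    and p: "(j, a) \<in> cl i x" and q: "(j', b) \<in> cl i y" and k: "j \<le> k" "j' \<le> k"
  shows "cl k (f k (phi j k a) (phi j' k b)) = cl i (f i x y)"
proof -
  from p obtain m where m: "i \<le> m" "j \<le> m" "phi i m x = phi j m a"
    and x: "x \<in> carrier (R i)" and a: "a \<in> carrier (R j)"
    by (auto simp: mem_class_iff)
  from q obtain m' where m': "i \<le> m'" "j' \<le> m'" "phi i m' y = phi j' m' b"
    and y: "y \<in> carrier (R i)" and b: "b \<in> carrier (R j')"
    by (auto simp: mem_class_iff)
  obtain n0 where n0: "m \<le> n0" "m' \<le> n0" by (rule upper_bound)
  obtain n where n: "k \<le> n" "n0 \<le> n" by (rule upper_bound)
  have mn: "m \<le> n" "m' \<le> n" and "i \<le> n" using n0 n m(1) by auto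
  have a_n: "phi j n a = phi i n x"
    using transition_comp[OF m(2) mn(1) a] transition_comp[OF m(1) mn(1) x] m(3) by simp
  have b_n: "phi j' n b = phi i n y"
    using transition_comp[OF m'(2) mn(2) b] transition_comp[OF m'(1) mn(2) y] m'(3) by simp
  have ak: "phi j k a \<in> carrier (R k)" and bk: "phi j' k b \<in> carrier (R k)"
    using transition_closed k a b by auto
  have "phi k n (f k (phi j k a) (phi j' k b)) = f n (phi j n a) (phi j' n b)"
    using compat[OF n(1) ak bk] transition_comp[OF k(1) n(1) a] transition_comp[OF k(2) n(1) b]
    by simp
  also have "\<dots> = phi i n (f i x y)"
    using a_n b_n compat[OF \<open>i \<le> n\<close> x y] by simp
  finally show ?thesis
    using class_eq_iff[OF closed[OF ak bk] closed[OF x y]] n(1) \<open>i \<le> n\<close> by blast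
qed

lemma dlim_op_class:
  assumes closed: "\<And>k a b. a \<in> carrier (R k) \<Longrightarrow> b \<in> carrier (R k) \<Longrightarrow> f k a b \<in> carrier (R k)"
    and compat: "\<And>k m a b. k \<le> m \<Longrightarrow> a \<in> carrier (R k) \<Longrightarrow> b \<in> carrier (R k) \<Longrightarrow>
       phi k m (f k a b) = f m (phi k m a) (phi k m b)"
    and x: "x \<in> carrier (R i)" and y: "y \<in> carrier (R i)"
  shows "dlim_op R phi f (cl i x) (cl i y) = cl i (f i x y)"
proof -
  have terms: "cl k (f k (phi (fst p) k (snd p)) (phi (fst q) k (snd q))) = cl i (f i x y)"
    if "p \<in> cl i x" "q \<in> cl i y" "fst p \<le> k" "fst q \<le> k" for p q k
    using op_term_class[where f=f, OF closed compat, of "fst p" "snd p" i x "fst q" "snd q" y k] that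
    by simp
  have "(i, x) \<in> cl i x" "(i, y) \<in> cl i y"
    using x y by (auto simp: mem_class_iff)
  then show ?thesis
    unfolding dlim_op_def using terms x y transition_id by fastforce
qed

lemma add_class:
  "x \<in> carrier (R i) \<Longrightarrow> y \<in> carrier (R i) \<Longrightarrow> cl i x \<oplus>\<^bsub>D\<^esub> cl i y = cl i (x \<oplus>\<^bsub>R i\<^esub> y)"
  unfolding direct_limit_def
  by (simp, rule dlim_op_class[where f="\<lambda>k. add (R k)", simplified])
     (auto simp: ring_hom_add[OF transition_hom] intro: ring.ring_simprules[OF stage_ring])

lemma mult_class:
  "x \<in> carrier (R i) \<Longrightarrow> y \<in> carrier (R i) \<Longrightarrow> cl i x \<otimes>\<^bsub>D\<^esub> cl i y = cl i (x \<otimes>\<^bsub>R i\<^esub> y)"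
  unfolding direct_limit_def
  by (simp, rule dlim_op_class[where f="\<lambda>k. monoid.mult (R k)", simplified])
     (auto simp: ring_hom_mult[OF transition_hom] intro: ring.ring_simprules[OF stage_ring])

(* A family of elements c_j compatible with the transition maps defines a single class;
   this identifies the constants 0 and 1 of D. *)
lemma compatible_family_class:
  assumes "\<And>j. c j \<in> carrier (R j)" and "\<And>j k. j \<le> k \<Longrightarrow> phi j k (c j) = c k"
  shows "(\<Union>j. cl j (c j)) = cl i (c i)"
proof -
  have "cl j (c j) = cl i (c i)" for j
  proof -
    obtain k where k: "i \<le> k" "j \<le> k" by (rule upper_bound)
    have "cl j (c j) = cl k (c k)" using class_lift[OF k(2) assms(1)] assms(2)[OF k(2)] by simp
    also have "\<dots> = cl i (c i)" using class_lift[OF k(1) assms(1)] assms(2)[OF k(1)] by simp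
    finally show ?thesis .
  qed
  then show ?thesis by blast
qed

lemma one_class: "\<one>\<^bsub>D\<^esub> = cl i \<one>\<^bsub>R i\<^esub>"
proof -
  have "(\<Union>j. cl j \<one>\<^bsub>R j\<^esub>) = cl i \<one>\<^bsub>R i\<^esub>"
    by (rule compatible_family_class) (simp_all add: transition_one ring.ring_simprules(6)[OF stage_ring])
  then show ?thesis by (simp add: direct_limit_def)
qed

lemma zero_class: "\<zero>\<^bsub>D\<^esub> = cl i \<zero>\<^bsub>R i\<^esub>"
proof -
  have "(\<Union>j. cl j \<zero>\<^bsub>R j\<^esub>) = cl i \<zero>\<^bsub>R i\<^esub>"
    by (rule compatible_family_class) (simp_all add: transition_zero ring.ring_simprules(2)[OF stage_ring])
  then show ?thesis by (simp add: direct_limit_def)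
qed

(* Each ring axiom of D is inherited from a single stage containing all elements involved. *)
lemma direct_limit_abelian_group: "abelian_group D"
proof (rule abelian_groupI)
  fix a b assume "a \<in> carrier D" "b \<in> carrier D"
  then obtain k x y where xy: "x \<in> carrier (R k)" "y \<in> carrier (R k)" "a = cl k x" "b = cl k y"
    by (rule common_stage2)
  interpret Rk: cring "R k" by (rule stage_cring)
  show "a \<oplus>\<^bsub>D\<^esub> b \<in> carrier D" using xy by (simp add: add_class class_closed)
  show "a \<oplus>\<^bsub>D\<^esub> b = b \<oplus>\<^bsub>D\<^esub> a" using xy by (simp add: add_class Rk.a_comm)
next
  show "\<zero>\<^bsub>D\<^esub> \<in> carrier D"
    using zero_class class_closed ring.ring_simprules(2)[OF stage_ring] by metis
next
  fix a b c assume "a \<in> carrier D" "b \<in> carrier D" "c \<in> carrier D"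
  then obtain k x y z where xyz: "x \<in> carrier (R k)" "y \<in> carrier (R k)" "z \<in> carrier (R k)"
    "a = cl k x" "b = cl k y" "c = cl k z"
    by (rule common_stage3)
  interpret Rk: cring "R k" by (rule stage_cring)
  show "a \<oplus>\<^bsub>D\<^esub> b \<oplus>\<^bsub>D\<^esub> c = a \<oplus>\<^bsub>D\<^esub> (b \<oplus>\<^bsub>D\<^esub> c)"
    using xyz by (simp add: add_class Rk.a_assoc)
next
  fix a assume "a \<in> carrier D"
  then obtain k x where x: "x \<in> carrier (R k)" "a = cl k x" by (rule carrier_cases)
  interpret Rk: cring "R k" by (rule stage_cring)
  show "\<zero>\<^bsub>D\<^esub> \<oplus>\<^bsub>D\<^esub> a = a" using x by (simp add: add_class zero_class[of k])
  show "\<exists>b\<in>carrier D. b \<oplus>\<^bsub>D\<^esub> a = \<zero>\<^bsub>D\<^esub>"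
    using x by (intro bexI[of _ "cl k (\<ominus>\<^bsub>R k\<^esub> x)"])
      (simp_all add: add_class zero_class[of k] class_closed Rk.l_neg)
qed

lemma direct_limit_comm_monoid: "comm_monoid D"
proof (rule comm_monoidI)
  fix a b assume "a \<in> carrier D" "b \<in> carrier D"
  then obtain k x y where xy: "x \<in> carrier (R k)" "y \<in> carrier (R k)" "a = cl k x" "b = cl k y"
    by (rule common_stage2)
  interpret Rk: cring "R k" by (rule stage_cring)
  show "a \<otimes>\<^bsub>D\<^esub> b \<in> carrier D" using xy by (simp add: mult_class class_closed)
  show "a \<otimes>\<^bsub>D\<^esub> b = b \<otimes>\<^bsub>D\<^esub> a" using xy by (simp add: mult_class Rk.m_comm)
next
  show "\<one>\<^bsub>D\<^esub> \<in> carrier D"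
    using one_class class_closed ring.ring_simprules(6)[OF stage_ring] by metis
next
  fix a b c assume "a \<in> carrier D" "b \<in> carrier D" "c \<in> carrier D"
  then obtain k x y z where xyz: "x \<in> carrier (R k)" "y \<in> carrier (R k)" "z \<in> carrier (R k)"
    "a = cl k x" "b = cl k y" "c = cl k z"
    by (rule common_stage3)
  interpret Rk: cring "R k" by (rule stage_cring)
  show "a \<otimes>\<^bsub>D\<^esub> b \<otimes>\<^bsub>D\<^esub> c = a \<otimes>\<^bsub>D\<^esub> (b \<otimes>\<^bsub>D\<^esub> c)"
    using xyz by (simp add: mult_class Rk.m_assoc)
next
  fix a assume "a \<in> carrier D"
  then obtain k x where x: "x \<in> carrier (R k)" "a = cl k x" by (rule carrier_cases)
  interpret Rk: cring "R k" by (rule stage_cring)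
  show "\<one>\<^bsub>D\<^esub> \<otimes>\<^bsub>D\<^esub> a = a" using x by (simp add: mult_class one_class[of k])
qed

theorem direct_limit_cring: "cring D"
proof (rule cringI[OF direct_limit_abelian_group direct_limit_comm_monoid])
  fix a b c assume "a \<in> carrier D" "b \<in> carrier D" "c \<in> carrier D"
  then obtain k x y z where xyz: "x \<in> carrier (R k)" "y \<in> carrier (R k)" "z \<in> carrier (R k)"
    "a = cl k x" "b = cl k y" "c = cl k z"
    by (rule common_stage3)
  interpret Rk: cring "R k" by (rule stage_cring)
  show "(a \<oplus>\<^bsub>D\<^esub> b) \<otimes>\<^bsub>D\<^esub> c = a \<otimes>\<^bsub>D\<^esub> c \<oplus>\<^bsub>D\<^esub> b \<otimes>\<^bsub>D\<^esub> c"
    using xyz by (simp add: mult_class add_class Rk.l_distr)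
qed

lemma class_ring_hom: "ring_hom_ring (R k) D (cl k)"
  using direct_limit_cring
  by (intro ring_hom_ringI[OF stage_ring cring.axioms(1)])
     (auto simp: class_closed mult_class add_class one_class[of k])

definition contraction :: "('i \<times> 'a) set set \<Rightarrow> 'i \<Rightarrow> 'a set" where
  "contraction J k = {x \<in> carrier (R k). cl k x \<in> J}"

lemma contraction_prime: "primeideal P D \<Longrightarrow> primeideal (contraction P k) (R k)"
  unfolding contraction_def by (rule ring_hom_ring.primeideal_vimage[OF class_ring_hom stage_cring])

definition stage_sum :: "('i \<times> 'a) set set \<Rightarrow> ('i \<times> 'a) set set \<Rightarrow> 'i \<Rightarrow> 'a set" where
  "stage_sum P Q k = contraction P k <+>\<^bsub>R k\<^esub> contraction Q k"

lemma stage_sum_imp_sum: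
  assumes "k \<le> m" and x: "x \<in> carrier (R k)" and "phi k m x \<in> stage_sum P Q m"
  shows "cl k x \<in> P <+>\<^bsub>D\<^esub> Q"
proof -
  obtain p q where p: "p \<in> carrier (R m)" "cl m p \<in> P" and q: "q \<in> carrier (R m)" "cl m q \<in> Q"
    and sum: "phi k m x = p \<oplus>\<^bsub>R m\<^esub> q"
    using assms(3) unfolding stage_sum_def contraction_def set_add_def' by blast
  have "cl k x = cl m (p \<oplus>\<^bsub>R m\<^esub> q)" using class_lift[OF assms(1) x] sum by simp
  also have "\<dots> = cl m p \<oplus>\<^bsub>D\<^esub> cl m q" using add_class[OF p(1) q(1)] by simp
  finally show ?thesis using p(2) q(2) unfolding set_add_def' by blast
qed

(* Conversely, a class in P + Q has a representative that, from some stage on, lies in the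
   stage sum: write it as a + b with a in P, b in Q and push everything to a common stage. *)
lemma sum_imp_stage_sum:
  assumes P: "ideal P D" and Q: "ideal Q D" and x: "x \<in> carrier (R k)"
    and "cl k x \<in> P <+>\<^bsub>D\<^esub> Q"
  obtains m where "k \<le> m" "phi k m x \<in> stage_sum P Q m"
proof -
  obtain a b where ab: "a \<in> P" "b \<in> Q" "cl k x = a \<oplus>\<^bsub>D\<^esub> b"
    using assms(4) unfolding set_add_def' by blast
  have "a \<in> carrier D" "b \<in> carrier D"
    using ideal.Icarr[OF P ab(1)] ideal.Icarr[OF Q ab(2)] by auto
  then obtain l p q where pq: "p \<in> carrier (R l)" "q \<in> carrier (R l)" "a = cl l p" "b = cl l q"
    by (rule common_stage2)
  interpret Rl: cring "R l" by (rule stage_cring)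
  have "cl k x = cl l (p \<oplus>\<^bsub>R l\<^esub> q)" using ab(3) pq add_class[OF pq(1,2)] by simp
  then obtain m where m: "k \<le> m" "l \<le> m" "phi k m x = phi l m (p \<oplus>\<^bsub>R l\<^esub> q)"
    using class_eq_iff[OF x Rl.add.m_closed[OF pq(1,2)]] by blast
  have "phi k m x = phi l m p \<oplus>\<^bsub>R m\<^esub> phi l m q"
    using m(3) ring_hom_add[OF transition_hom[OF m(2)] pq(1,2)] by simp
  moreover have "phi l m p \<in> contraction P m" "phi l m q \<in> contraction Q m"
    using class_lift[OF m(2)] transition_closed[OF m(2)] pq ab(1,2)
    unfolding contraction_def by auto
  ultimately have "phi k m x \<in> stage_sum P Q m"
    unfolding stage_sum_def set_add_def' by blast
  then show ?thesis using m(1) that by blast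
qed

lemma sum_eq_carrier_if_stage_sum_eq_carrier:
  assumes P: "ideal P D" and Q: "ideal Q D" and k: "stage_sum P Q k = carrier (R k)"
  shows "P <+>\<^bsub>D\<^esub> Q = carrier D"
proof -
  have one: "\<one>\<^bsub>R k\<^esub> \<in> carrier (R k)" by (rule ring.ring_simprules(6)[OF stage_ring])
  then have "cl k \<one>\<^bsub>R k\<^esub> \<in> P <+>\<^bsub>D\<^esub> Q"
    using stage_sum_imp_sum[OF order_refl one] k transition_id[OF one] by simp
  then have "\<one>\<^bsub>D\<^esub> \<in> P <+>\<^bsub>D\<^esub> Q" by (simp add: one_class[of k])
  then show ?thesis
    using ideal.one_imp_carrier[OF ring.add_ideals[OF cring.axioms(1)[OF direct_limit_cring] P Q]]
    by blast
qed

(* If all stage sums are prime, so is P + Q: properness and the prime condition can both be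
   tested at a single sufficiently large stage. *)
lemma sum_prime_if_stage_sums_prime:
  assumes P: "ideal P D" and Q: "ideal Q D"
    and prime: "\<And>k. primeideal (stage_sum P Q k) (R k)"
  shows "primeideal (P <+>\<^bsub>D\<^esub> Q) D"
proof (rule primeidealI[OF _ direct_limit_cring])
  show "ideal (P <+>\<^bsub>D\<^esub> Q) D"
    by (rule ring.add_ideals[OF cring.axioms(1)[OF direct_limit_cring] P Q])
  show "carrier D \<noteq> P <+>\<^bsub>D\<^esub> Q"
  proof
    fix i :: 'i
    have one: "\<one>\<^bsub>R i\<^esub> \<in> carrier (R i)" by (rule ring.ring_simprules(6)[OF stage_ring])
    assume "carrier D = P <+>\<^bsub>D\<^esub> Q"
    then have "cl i \<one>\<^bsub>R i\<^esub> \<in> P <+>\<^bsub>D\<^esub> Q" using class_closed[OF one] by simp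
    then obtain m where "i \<le> m" "phi i m \<one>\<^bsub>R i\<^esub> \<in> stage_sum P Q m"
      using sum_imp_stage_sum[OF P Q one] by blast
    then have "\<one>\<^bsub>R m\<^esub> \<in> stage_sum P Q m" by (simp add: transition_one)
    then show False
      using primeideal.I_notcarr[OF prime] ideal.one_imp_carrier[OF primeideal.axioms(1)[OF prime]]
      by metis
  qed
next
  fix a b assume a: "a \<in> carrier D" and b: "b \<in> carrier D"
    and ab: "a \<otimes>\<^bsub>D\<^esub> b \<in> P <+>\<^bsub>D\<^esub> Q"
  from a b obtain k x y where xy: "x \<in> carrier (R k)" "y \<in> carrier (R k)" "a = cl k x" "b = cl k y"
    by (rule common_stage2)
  interpret Rk: cring "R k" by (rule stage_cring)
  have "cl k (x \<otimes>\<^bsub>R k\<^esub> y) \<in> P <+>\<^bsub>D\<^esub> Q" using ab xy by (simp add: mult_class)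
  then obtain m where m: "k \<le> m" "phi k m (x \<otimes>\<^bsub>R k\<^esub> y) \<in> stage_sum P Q m"
    using sum_imp_stage_sum[OF P Q Rk.m_closed[OF xy(1,2)]] by blast
  then have "phi k m x \<otimes>\<^bsub>R m\<^esub> phi k m y \<in> stage_sum P Q m"
    using ring_hom_mult[OF transition_hom[OF m(1)] xy(1,2)] by simp
  then have "phi k m x \<in> stage_sum P Q m \<or> phi k m y \<in> stage_sum P Q m"
    using primeideal.I_prime[OF prime] transition_closed[OF m(1)] xy(1,2) by blast
  then show "a \<in> P <+>\<^bsub>D\<^esub> Q \<or> b \<in> P <+>\<^bsub>D\<^esub> Q"
    using stage_sum_imp_sum[OF m(1)] xy by blast
qed

theorem direct_limit_iip:
  assumes iip: "\<And>i. irreducible_intersection_property (R i)"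
  shows "irreducible_intersection_property D"
  unfolding irreducible_intersection_property_def
proof (intro allI impI)
  fix P Q assume PQ: "primeideal P D \<and> primeideal Q D"
  then have P: "ideal P D" and Q: "ideal Q D" by (simp_all add: primeideal_def)
  have "stage_sum P Q k = carrier (R k) \<or> primeideal (stage_sum P Q k) (R k)" for k
    using iip[of k] contraction_prime PQ
    unfolding irreducible_intersection_property_def stage_sum_def by blast
  then show "P <+>\<^bsub>D\<^esub> Q = carrier D \<or> primeideal (P <+>\<^bsub>D\<^esub> Q) D"
    using sum_eq_carrier_if_stage_sum_eq_carrier[OF P Q] sum_prime_if_stage_sums_prime[OF P Q]
    by blast
qed

end

theorem mainTheorem12:
  fixes R :: "'i::order \<Rightarrow> 'a ring" and phi :: "'i \<Rightarrow> 'i \<Rightarrow> 'a \<Rightarrow> 'a"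
  assumes directed: "\<forall>i j::'i. \<exists>k. i \<le> k \<and> j \<le> k"
    and system: "directed_system R phi"
    and iip: "\<forall>i. irreducible_intersection_property (R i)"
  shows "cring (direct_limit R phi) \<and> irreducible_intersection_property (direct_limit R phi)"
proof -
  interpret directed_ring_system R phi using directed system by (rule directed_ring_system.intro)
  show ?thesis using direct_limit_cring direct_limit_iip iip by blast
qed

end
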